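(* Let $m,n,r,d$ be integers with $m,n\ge2$, $d\ge1$, $0<r<\min\{m,n\}$, let $0\le a\le rd$, and for every list of integers $(\rho_1,\dots,\rho_r)$ with $0\le\rho_i\le d$ and $\sum_i\rho_i=a$ let $$\mathcal{A}(\rho_1,\dots,\rho_r)=\Big\{L(\lambda)R(\lambda): L\in\mathbb{C}[\lambda]^{m\times r},\ R\in\mathbb{C}[\lambda]^{r\times n},\ \deg(R_{i*})=\rho_i,\ \deg(L_{*i})=d-\rho_i\ (i=1,\dots,r)\Big\}.$$ Then, for any such list $(\rho_1,\dots,\rho_r)$: (i) if $(\sigma_1,\dots,\sigma_r)$ is any permutation of $(1,\dots,r)$, then $\mathcal{A}(\rho_1,\dots,\rho_r)=\mathcal{A}(\rho_{\sigma_1},\dots,\rho_{\sigma_r})$; (ii) if $\rho_j-\rho_k\ge2$ for some indices $j\ne k$, then $\mathcal{A}(\rho_1,\dots,\rho_r)\subseteq\overline{\mathcal{A}(\rho'_1,\dots,\rho'_r)}$, where $\rho'_j=\rho_j-1$, $\rho'_k=\rho_k+1$ and $\rho'_i=\rho_i$ for $i\ne j,k$; (iii) if $d_R=\lfloor a/r\rfloor$ and $t_R=a\bmod r$, then $\mathcal{A}(\rho_1,\dots,\rho_r)\subseteq\overline{\mathcal{A}(d_R+1,\dots,d_R+1,d_R,\dots,d_R)}$, where $d_R+1$ appears $t_R$ times and $d_R$ appears $r-t_R$ times.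
   Context: Degree of a polynomial vector: maximum degree of entries, $\deg0=-\infty$. $L_{*i}$: $i$th column; $R_{i*}$: $i$th row. Closures are taken in the space $\mathbb{C}[\lambda]^{m\times n}_d$ of complex $m\times n$ polynomial matrices of degree at most $d$, with metric $\mathrm{dist}(P,Q)=(\sum_{i=0}^d\|P_i-Q_i\|_F^2)^{1/2}$, $P_i,Q_i$ the coefficients of $\lambda^i$. *)

theory Defs
  imports "HOL-Analysis.Analysis" "HOL-Computational_Algebra.Polynomial"
begin

text \<open>An m x n polynomial matrix is represented as a function nat => nat => complex poly
  whose entries outside the index range i < m, j < n are 0.\<close>

definition pmat_ok :: "nat \<Rightarrow> nat \<Rightarrow> (nat \<Rightarrow> nat \<Rightarrow> complex poly) \<Rightarrow> bool" where
  "pmat_ok m n P \<longleftrightarrow> (\<forall>i j. \<not> (i < m \<and> j < n) \<longrightarrow> P i j = 0)"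

text \<open>Degree of a polynomial vector of length len: maximum degree of entries;
  None encodes -infinity (the zero vector).\<close>

definition pvec_deg :: "(nat \<Rightarrow> complex poly) \<Rightarrow> nat \<Rightarrow> nat option" where
  "pvec_deg v len = (if \<forall>j<len. v j = 0 then None
     else Some (Max {degree (v j) | j. j < len \<and> v j \<noteq> 0}))"

definition pmat_mult :: "nat \<Rightarrow> nat \<Rightarrow> nat \<Rightarrow> (nat \<Rightarrow> nat \<Rightarrow> complex poly)
    \<Rightarrow> (nat \<Rightarrow> nat \<Rightarrow> complex poly) \<Rightarrow> (nat \<Rightarrow> nat \<Rightarrow> complex poly)" where
  "pmat_mult m r n L R = (\<lambda>i j. if i < m \<and> j < n then (\<Sum>k<r. L i k * R k j) else 0)"

definition setA :: "nat \<Rightarrow> nat \<Rightarrow> nat \<Rightarrow> nat list \<Rightarrow> (nat \<Rightarrow> nat \<Rightarrow> complex poly) set" where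
  "setA m n d \<rho> = {pmat_mult m (length \<rho>) n L R | L R.
      \<forall>i<length \<rho>. pvec_deg (\<lambda>j. R i j) n = Some (\<rho> ! i)
                  \<and> pvec_deg (\<lambda>k. L k i) m = Some (d - \<rho> ! i)}"

definition pm_dist :: "nat \<Rightarrow> nat \<Rightarrow> nat \<Rightarrow> (nat \<Rightarrow> nat \<Rightarrow> complex poly)
    \<Rightarrow> (nat \<Rightarrow> nat \<Rightarrow> complex poly) \<Rightarrow> real" where
  "pm_dist m n d P Q = sqrt (\<Sum>k\<le>d. \<Sum>i<m. \<Sum>j<n. (cmod (coeff (P i j) k - coeff (Q i j) k))\<^sup>2)"

definition pm_closure :: "nat \<Rightarrow> nat \<Rightarrow> nat \<Rightarrow> (nat \<Rightarrow> nat \<Rightarrow> complex poly) set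
    \<Rightarrow> (nat \<Rightarrow> nat \<Rightarrow> complex poly) set" where
  "pm_closure m n d S = {P. pmat_ok m n P \<and> (\<forall>i<m. \<forall>j<n. degree (P i j) \<le> d)
      \<and> (\<forall>e>0. \<exists>Q\<in>S. pm_dist m n d P Q < e)}"

end

theory Submission
  imports Defs "HOL-Combinatorics.Permutations"
begin

text \<open>
  (i) Permuting the columns of L and the rows of R by the same permutation does not change LR.
  (ii) Write the row R_j = x_0 + \<lambda> x' and the column L_k = b_0 + \<lambda> b' with x_0, b_0 constant.
  Moving the factor \<lambda> from R_j to L_j and from L_k to R_k, and coupling the two rank-one
  terms through \<epsilon> and 1/\<epsilon>, gives factorisations of the degree pattern \<rho>' whose product is
  LR + \<epsilon>(b_0 x' - b' x_0); letting \<epsilon> \<rightarrow> 0 gives LR \<in> closure A(\<rho>').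
  (iii) Each step of (ii) lowers the sum of squares of \<rho> while keeping its sum, so iterating
  it ends at a list whose entries differ by at most one, i.e. a permutation of the balanced
  list; closure is transitive.
\<close>

lemma pvec_deg_eq_Some_iff:
  "pvec_deg v len = Some D \<longleftrightarrow> (\<forall>j<len. degree (v j) \<le> D) \<and> (\<exists>j<len. coeff (v j) D \<noteq> 0)"
proof (cases "\<forall>j<len. v j = 0")
  case True
  then show ?thesis by (auto simp: pvec_deg_def)
next
  case False
  define S where "S = {degree (v j) | j. j < len \<and> v j \<noteq> 0}"
  have fin: "finite S" and ne: "S \<noteq> {}"
    using False unfolding S_def by auto
  have pd: "pvec_deg v len = Some (Max S)"
    using False unfolding pvec_deg_def S_def by auto
  have le_Max: "degree (v j) \<le> Max S" if "j < len" for j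
    using that fin by (cases "v j = 0") (auto simp: S_def intro!: Max_ge)
  show ?thesis
  proof
    assume "pvec_deg v len = Some D"
    then have D: "D = Max S" using pd by simp
    from Max_in[OF fin ne] obtain j where "j < len" "v j \<noteq> 0" "degree (v j) = D"
      unfolding D S_def by auto
    then have "coeff (v j) D \<noteq> 0" by auto
    then show "(\<forall>j<len. degree (v j) \<le> D) \<and> (\<exists>j<len. coeff (v j) D \<noteq> 0)"
      using le_Max D \<open>j < len\<close> by auto
  next
    assume A: "(\<forall>j<len. degree (v j) \<le> D) \<and> (\<exists>j<len. coeff (v j) D \<noteq> 0)"
    then obtain j where j: "j < len" "coeff (v j) D \<noteq> 0" by blast
    then have "degree (v j) = D" using A le_degree by (meson le_antisym)
    then have "D \<in> S" using j unfolding S_def by auto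
    moreover have "\<forall>s\<in>S. s \<le> D" using A unfolding S_def by auto
    ultimately show "pvec_deg v len = Some D" using pd fin by (simp add: Max_eqI)
  qed
qed

lemma pvec_deg_SomeD:
  assumes "pvec_deg v len = Some D" and "j < len"
  shows "degree (v j) \<le> D"
  using assms by (simp add: pvec_deg_eq_Some_iff)

lemma pvec_deg_add_lower:
  assumes "pvec_deg v len = Some D" and "\<And>j. j < len \<Longrightarrow> degree (w j) < D"
  shows "pvec_deg (\<lambda>j. v j + w j) len = Some D"
proof -
  have "degree (v j + w j) \<le> D" if "j < len" for j
    using pvec_deg_SomeD[OF assms(1) that] assms(2)[OF that] by (simp add: degree_add_le)
  moreover have "coeff (v j + w j) D = coeff (v j) D" if "j < len" for j
    using assms(2)[OF that] by (simp add: coeff_eq_0)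
  ultimately show ?thesis using assms(1) by (auto simp: pvec_deg_eq_Some_iff)
qed

lemma pvec_deg_pCons:
  assumes "pvec_deg v len = Some D"
  shows "pvec_deg (\<lambda>j. pCons (c j) (v j)) len = Some (Suc D)"
  using assms by (auto simp: pvec_deg_eq_Some_iff)

lemma pvec_deg_poly_shift:
  assumes "pvec_deg v len = Some (Suc D)"
  shows "pvec_deg (\<lambda>j. poly_shift 1 (v j)) len = Some D"
proof -
  have "degree (poly_shift 1 (v j)) \<le> D" if "j < len" for j
    using pvec_deg_SomeD[OF assms that] by (intro degree_le) (simp add: coeff_poly_shift coeff_eq_0)
  then show ?thesis using assms by (auto simp: pvec_deg_eq_Some_iff coeff_poly_shift)
qed

lemma setA_memI:
  assumes "\<And>i. i < length \<rho> \<Longrightarrow> pvec_deg (\<lambda>j. R i j) n = Some (\<rho> ! i)"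
    and "\<And>i. i < length \<rho> \<Longrightarrow> pvec_deg (\<lambda>k. L k i) m = Some (d - \<rho> ! i)"
  shows "pmat_mult m (length \<rho>) n L R \<in> setA m n d \<rho>"
  using assms unfolding setA_def by blast

lemma setA_memE:
  assumes "P \<in> setA m n d \<rho>"
  obtains L R where "P = pmat_mult m (length \<rho>) n L R"
    and "\<forall>i<length \<rho>. pvec_deg (\<lambda>j. R i j) n = Some (\<rho> ! i)"
    and "\<forall>i<length \<rho>. pvec_deg (\<lambda>k. L k i) m = Some (d - \<rho> ! i)"
  using assms unfolding setA_def by blast

lemma setA_bounded:
  assumes "\<forall>x\<in>set \<rho>. x \<le> d" and "P \<in> setA m n d \<rho>"
  shows "pmat_ok m n P" and "\<forall>i<m. \<forall>j<n. degree (P i j) \<le> d"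
proof -
  obtain L R where P: "P = pmat_mult m (length \<rho>) n L R"
    and R: "\<forall>i<length \<rho>. pvec_deg (\<lambda>j. R i j) n = Some (\<rho> ! i)"
    and L: "\<forall>i<length \<rho>. pvec_deg (\<lambda>k. L k i) m = Some (d - \<rho> ! i)"
    using assms(2) by (rule setA_memE)
  show "pmat_ok m n P" unfolding P pmat_mult_def pmat_ok_def by auto
  have "degree (L i k * R k j) \<le> d" if "i < m" "j < n" "k < length \<rho>" for i j k
  proof -
    have "degree (L i k * R k j) \<le> (d - \<rho> ! k) + \<rho> ! k"
      using pvec_deg_SomeD[OF L[rule_format, OF that(3)] that(1)]
        pvec_deg_SomeD[OF R[rule_format, OF that(3)] that(2)]
      by (meson add_mono degree_mult_le order_trans)
    also have "\<dots> = d" using assms(1) that(3) by simp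
    finally show ?thesis .
  qed
  then show "\<forall>i<m. \<forall>j<n. degree (P i j) \<le> d"
    unfolding P pmat_mult_def by (auto intro: degree_sum_le)
qed

lemma setA_subset_permute_list:
  assumes "\<sigma> permutes {..<length \<rho>}"
  shows "setA m n d \<rho> \<subseteq> setA m n d (permute_list \<sigma> \<rho>)"
proof
  fix P assume "P \<in> setA m n d \<rho>"
  then obtain L R where P: "P = pmat_mult m (length \<rho>) n L R"
    and R: "\<forall>i<length \<rho>. pvec_deg (\<lambda>j. R i j) n = Some (\<rho> ! i)"
    and L: "\<forall>i<length \<rho>. pvec_deg (\<lambda>k. L k i) m = Some (d - \<rho> ! i)"
    by (rule setA_memE)
  have "P = pmat_mult m (length \<rho>) n (\<lambda>a i. L a (\<sigma> i)) (\<lambda>i c. R (\<sigma> i) c)"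
    unfolding P pmat_mult_def
    using sum.permute[OF assms, of "\<lambda>k. L _ k * R k _"] by (simp add: comp_def fun_eq_iff)
  also have "\<dots> \<in> setA m n d (permute_list \<sigma> \<rho>)"
    using setA_memI[of "permute_list \<sigma> \<rho>"] L R permutes_in_image[OF assms]
    by (simp add: permute_list_nth[OF assms])
  finally show "P \<in> setA m n d (permute_list \<sigma> \<rho>)" .
qed

lemma setA_mset_eq:
  assumes "mset \<rho> = mset \<rho>'"
  shows "setA m n d \<rho> = setA m n d \<rho>'"
proof -
  have "setA m n d xs \<subseteq> setA m n d ys" if "mset ys = mset xs" for xs ys :: "nat list"
    using setA_subset_permute_list by (metis mset_eq_permutation[OF that])
  then show ?thesis using assms by (simp add: subset_antisym)
qed

lemma pm_dist_triangle: "pm_dist m n d P R \<le> pm_dist m n d P Q + pm_dist m n d Q R"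
proof -
  let ?I = "{..d} \<times> {..<m} \<times> {..<n}"
  let ?\<delta> = "\<lambda>P Q (k, i, j). cmod (coeff (P i j) k - coeff (Q i j) k)"
  have L2: "pm_dist m n d P Q = L2_set (?\<delta> P Q) ?I" for P Q
    unfolding pm_dist_def L2_set_def by (simp add: sum.cartesian_product case_prod_beta)
  have "L2_set (?\<delta> P R) ?I \<le> L2_set (\<lambda>x. ?\<delta> P Q x + ?\<delta> Q R x) ?I"
    by (rule L2_set_mono) (auto intro: norm_diff_triangle_le)
  also have "\<dots> \<le> L2_set (?\<delta> P Q) ?I + L2_set (?\<delta> Q R) ?I"
    by (rule L2_set_triangle_ineq)
  finally show ?thesis by (simp only: L2)
qed

lemma pm_dist_add_smult:
  assumes "\<And>i j. i < m \<Longrightarrow> j < n \<Longrightarrow> Q i j = P i j + smult \<epsilon> (E i j)"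
  shows "pm_dist m n d P Q = cmod \<epsilon> * pm_dist m n d E (\<lambda>_ _. 0)"
proof -
  have "(cmod (coeff (P i j) k - coeff (Q i j) k))\<^sup>2 = (cmod \<epsilon>)\<^sup>2 * (cmod (coeff (E i j) k - 0))\<^sup>2"
    if "i < m" "j < n" for i j k
    using assms[OF that] by (simp add: norm_mult power_mult_distrib)
  then have "pm_dist m n d P Q = sqrt ((cmod \<epsilon>)\<^sup>2 * (pm_dist m n d E (\<lambda>_ _. 0))\<^sup>2)"
    unfolding pm_dist_def by (simp add: sum_distrib_left sum_nonneg)
  moreover have "pm_dist m n d E (\<lambda>_ _. 0) \<ge> 0" by (simp add: pm_dist_def sum_nonneg)
  ultimately show ?thesis by (simp add: real_sqrt_mult)
qed

lemma pm_closureI: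
  assumes "pmat_ok m n P" and "\<forall>i<m. \<forall>j<n. degree (P i j) \<le> d"
    and "\<And>\<epsilon>. \<epsilon> \<noteq> 0 \<Longrightarrow> Q \<epsilon> \<in> S"
    and "\<And>\<epsilon>. \<epsilon> \<noteq> 0 \<Longrightarrow> pm_dist m n d P (Q \<epsilon>) \<le> cmod \<epsilon> * C"
  shows "P \<in> pm_closure m n d S"
proof -
  have "\<exists>Q\<in>S. pm_dist m n d P Q < e" if "e > 0" for e
  proof -
    define \<eta> where "\<eta> = e / (\<bar>C\<bar> + 1)"
    have "\<eta> > 0" using \<open>e > 0\<close> by (simp add: \<eta>_def add_pos_nonneg)
    define \<epsilon> where "\<epsilon> = complex_of_real \<eta>"
    have "\<epsilon> \<noteq> 0" using \<open>\<eta> > 0\<close> by (simp add: \<epsilon>_def)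
    have "cmod \<epsilon> * C \<le> \<eta> * \<bar>C\<bar>"
      using \<open>\<eta> > 0\<close> by (simp add: \<epsilon>_def mult_left_mono)
    also have "\<dots> < e" using \<open>e > 0\<close> by (simp add: \<eta>_def field_simps)
    finally show ?thesis using assms(3,4) \<open>\<epsilon> \<noteq> 0\<close> by (meson le_less_trans)
  qed
  then show ?thesis using assms(1,2) by (simp add: pm_closure_def)
qed

lemma pm_closure_trans:
  assumes "A \<subseteq> pm_closure m n d B" and "B \<subseteq> pm_closure m n d C"
  shows "A \<subseteq> pm_closure m n d C"
proof
  fix P assume "P \<in> A"
  then have P: "P \<in> pm_closure m n d B" using assms(1) by blast
  have approx: "\<forall>e>0. \<exists>Q'\<in>S. pm_dist m n d P' Q' < e" if "P' \<in> pm_closure m n d S" for P' S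
    using that by (simp add: pm_closure_def)
  have "\<exists>Q'\<in>C. pm_dist m n d P Q' < e" if "e > 0" for e
  proof -
    have "e / 2 > 0" using \<open>e > 0\<close> by simp
    then obtain Q where "Q \<in> B" and PQ: "pm_dist m n d P Q < e / 2"
      using approx[OF P] by blast
    then have "Q \<in> pm_closure m n d C" using assms(2) by blast
    then obtain Q' where "Q' \<in> C" and QQ': "pm_dist m n d Q Q' < e / 2"
      using approx \<open>e / 2 > 0\<close> by blast
    moreover have "pm_dist m n d P Q' < e"
      using pm_dist_triangle[of m n d P Q' Q] PQ QQ' by linarith
    ultimately show ?thesis by blast
  qed
  then show "P \<in> pm_closure m n d C" using P by (simp add: pm_closure_def)
qed

lemma setA_subset_pm_closure:
  assumes "\<forall>x\<in>set \<rho>. x \<le> d"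
  shows "setA m n d \<rho> \<subseteq> pm_closure m n d (setA m n d \<rho>)"
proof
  fix P assume "P \<in> setA m n d \<rho>"
  then show "P \<in> pm_closure m n d (setA m n d \<rho>)"
    using setA_bounded[OF assms] by (intro pm_closureI[where Q = "\<lambda>_. P" and C = 0])
      (auto simp: pm_dist_def)
qed

lemma sum_split_two:
  assumes "finite A" and "j \<in> A" and "k \<in> A" and "j \<noteq> k"
  shows "sum g A = g j + g k + sum g (A - {j, k})"
proof -
  have "sum g A = g j + sum g (A - {j})"
    using assms by (simp add: sum.remove)
  also have "sum g (A - {j}) = g k + sum g (A - {j} - {k})"
    using assms by (simp add: sum.remove)
  also have "A - {j} - {k} = A - {j, k}" by blast
  finally show ?thesis by (simp add: add.assoc)
qed

lemma rank_two_perturbation: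
  fixes X e e' :: "'a::comm_ring_1"
  assumes "e * e' = 1"
  shows "(e * b0 + X * l) * (x' + e' * y) + (b' - e' * l) * (X * y - e * x0)
       = l * (x0 + X * x') + (b0 + X * b') * y + e * (b0 * x' - b' * x0)"
proof -
  have "(e * b0 + X * l) * (x' + e' * y) + (b' - e' * l) * (X * y - e * x0)
      = X * l * x' + X * b' * y + e * (b0 * x' - b' * x0) + (e * e') * (b0 * y + l * x0)"
    by (simp add: algebra_simps)
  then show ?thesis using assms by (simp add: algebra_simps)
qed

lemma pCons_coeff_0_poly_shift: "pCons (coeff p 0) (poly_shift 1 p) = p"
  by (simp add: poly_eq_iff coeff_pCons coeff_poly_shift split: nat.split)

definition balance_left ::
    "complex \<Rightarrow> nat \<Rightarrow> nat \<Rightarrow> (nat \<Rightarrow> nat \<Rightarrow> complex poly) \<Rightarrow> nat \<Rightarrow> nat \<Rightarrow> complex poly" where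
  "balance_left \<epsilon> j k L a i =
     (if i = j then pCons (\<epsilon> * coeff (L a k) 0) (L a j)
      else if i = k then poly_shift 1 (L a k) - smult (inverse \<epsilon>) (L a j)
      else L a i)"

definition balance_right ::
    "complex \<Rightarrow> nat \<Rightarrow> nat \<Rightarrow> (nat \<Rightarrow> nat \<Rightarrow> complex poly) \<Rightarrow> nat \<Rightarrow> nat \<Rightarrow> complex poly" where
  "balance_right \<epsilon> j k R i c =
     (if i = j then poly_shift 1 (R j c) + smult (inverse \<epsilon>) (R k c)
      else if i = k then pCons (- (\<epsilon> * coeff (R j c) 0)) (R k c)
      else R i c)"

lemma pmat_mult_balance:
  assumes "j < r" and "k < r" and "j \<noteq> k" and "\<epsilon> \<noteq> 0" and "a < m" and "c < n"
  shows "pmat_mult m r n (balance_left \<epsilon> j k L) (balance_right \<epsilon> j k R) a c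
       = pmat_mult m r n L R a c + smult \<epsilon> ([:coeff (L a k) 0:] * poly_shift 1 (R j c)
                                         - poly_shift 1 (L a k) * [:coeff (R j c) 0:])"
proof -
  let ?X = "[:0, 1:] :: complex poly"
  let ?L' = "balance_left \<epsilon> j k L" and ?R' = "balance_right \<epsilon> j k R"
  let ?b0 = "[:coeff (L a k) 0:]" and ?x0 = "[:coeff (R j c) 0:]"
  have pCons_eq: "pCons b p = [:b:] + ?X * p" for b and p :: "complex poly" by simp
  have L_k: "L a k = ?b0 + ?X * poly_shift 1 (L a k)"
    and R_j: "R j c = ?x0 + ?X * poly_shift 1 (R j c)"
    by (simp_all only: pCons_eq[symmetric] pCons_coeff_0_poly_shift)
  have "[:\<epsilon>:] * [:inverse \<epsilon>:] = 1" using \<open>\<epsilon> \<noteq> 0\<close> by (simp add: one_pCons)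
  note identity = rank_two_perturbation[OF this, of ?b0 ?X "L a j" "poly_shift 1 (R j c)" "R k c"
      "poly_shift 1 (L a k)" ?x0]
  have "?L' a j = [:\<epsilon>:] * ?b0 + ?X * L a j" and "?R' j c = poly_shift 1 (R j c) + [:inverse \<epsilon>:] * R k c"
    and "?L' a k = poly_shift 1 (L a k) - [:inverse \<epsilon>:] * L a j"
    and "?R' k c = ?X * R k c - [:\<epsilon>:] * ?x0"
    using \<open>j \<noteq> k\<close> by (simp_all add: balance_left_def balance_right_def)
  then have two_terms: "?L' a j * ?R' j c + ?L' a k * ?R' k c
      = L a j * R j c + L a k * R k c + smult \<epsilon> (?b0 * poly_shift 1 (R j c) - poly_shift 1 (L a k) * ?x0)"
    using identity by (simp only: flip: L_k R_j) (simp add: ac_simps)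
  have "(\<Sum>i\<in>{..<r} - {j, k}. ?L' a i * ?R' i c) = (\<Sum>i\<in>{..<r} - {j, k}. L a i * R i c)"
    by (rule sum.cong) (auto simp: balance_left_def balance_right_def)
  then show ?thesis
    using assms two_terms
    by (simp add: pmat_mult_def sum_split_two[of "{..<r}" j k])
qed

lemma pvec_deg_balance_lowered:
  assumes "pvec_deg (\<lambda>c. R j c) n = Some p" and "pvec_deg (\<lambda>c. R k c) n = Some q"
    and "pvec_deg (\<lambda>a. L a j) m = Some (d - p)" and "q + 2 \<le> p" and "p \<le> d"
  shows "pvec_deg (\<lambda>c. balance_right \<epsilon> j k R j c) n = Some (p - 1)"
    and "pvec_deg (\<lambda>a. balance_left \<epsilon> j k L a j) m = Some (d - (p - 1))"
proof -
  have "pvec_deg (\<lambda>c. R j c) n = Some (Suc (p - 1))"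
    using assms(1,4) by (simp add: Suc_diff_Suc)
  then have "pvec_deg (\<lambda>c. poly_shift 1 (R j c) + smult (inverse \<epsilon>) (R k c)) n = Some (p - 1)"
    using assms(4)
    by (intro pvec_deg_add_lower[OF pvec_deg_poly_shift])
      (auto intro!: le_less_trans[OF degree_smult_le] le_less_trans[OF pvec_deg_SomeD[OF assms(2)]])
  then show "pvec_deg (\<lambda>c. balance_right \<epsilon> j k R j c) n = Some (p - 1)"
    by (simp add: balance_right_def)
  have "pvec_deg (\<lambda>a. pCons (\<epsilon> * coeff (L a k) 0) (L a j)) m = Some (Suc (d - p))"
    using assms(3) by (rule pvec_deg_pCons)
  then show "pvec_deg (\<lambda>a. balance_left \<epsilon> j k L a j) m = Some (d - (p - 1))"
    using assms(4,5) by (simp add: balance_left_def Suc_diff_le)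
qed

lemma pvec_deg_balance_raised:
  assumes "j \<noteq> k" and "pvec_deg (\<lambda>c. R k c) n = Some q"
    and "pvec_deg (\<lambda>a. L a j) m = Some (d - p)" and "pvec_deg (\<lambda>a. L a k) m = Some (d - q)"
    and "q + 2 \<le> p" and "p \<le> d"
  shows "pvec_deg (\<lambda>c. balance_right \<epsilon> j k R k c) n = Some (q + 1)"
    and "pvec_deg (\<lambda>a. balance_left \<epsilon> j k L a k) m = Some (d - (q + 1))"
proof -
  have "pvec_deg (\<lambda>c. pCons (- (\<epsilon> * coeff (R j c) 0)) (R k c)) n = Some (Suc q)"
    using assms(2) by (rule pvec_deg_pCons)
  then show "pvec_deg (\<lambda>c. balance_right \<epsilon> j k R k c) n = Some (q + 1)"
    using assms(1) by (simp add: balance_right_def)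
  have "pvec_deg (\<lambda>a. L a k) m = Some (Suc (d - (q + 1)))"
    using assms(4-6) by (simp add: Suc_diff_Suc)
  then have "pvec_deg (\<lambda>a. poly_shift 1 (L a k) + smult (- inverse \<epsilon>) (L a j)) m = Some (d - (q + 1))"
    using assms(5,6)
    by (intro pvec_deg_add_lower[OF pvec_deg_poly_shift])
      (auto intro!: le_less_trans[OF degree_smult_le] le_less_trans[OF pvec_deg_SomeD[OF assms(3)]])
  then show "pvec_deg (\<lambda>a. balance_left \<epsilon> j k L a k) m = Some (d - (q + 1))"
    using assms(1) by (simp add: balance_left_def)
qed

lemma pmat_mult_balance_in_setA:
  assumes "\<forall>x\<in>set \<rho>. x \<le> d" and "j < length \<rho>" and "k < length \<rho>" and "\<rho> ! k + 2 \<le> \<rho> ! j"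
    and R: "\<forall>i<length \<rho>. pvec_deg (\<lambda>c. R i c) n = Some (\<rho> ! i)"
    and L: "\<forall>i<length \<rho>. pvec_deg (\<lambda>a. L a i) m = Some (d - \<rho> ! i)"
  shows "pmat_mult m (length \<rho>) n (balance_left \<epsilon> j k L) (balance_right \<epsilon> j k R)
         \<in> setA m n d (\<rho>[j := \<rho> ! j - 1, k := \<rho> ! k + 1])"
proof -
  let ?\<rho>' = "\<rho>[j := \<rho> ! j - 1, k := \<rho> ! k + 1]"
  have "j \<noteq> k" and "\<rho> ! j \<le> d" using assms(1-4) by auto
  note degrees = R[rule_format, OF assms(2)] R[rule_format, OF assms(3)]
    L[rule_format, OF assms(2)] L[rule_format, OF assms(3)]
  note lowered = pvec_deg_balance_lowered[where R = R and L = L and j = j and k = k and \<epsilon> = \<epsilon>,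
      OF degrees(1-3) assms(4) \<open>\<rho> ! j \<le> d\<close>]
  note raised = pvec_deg_balance_raised[where R = R and L = L and j = j and k = k and \<epsilon> = \<epsilon>,
      OF \<open>j \<noteq> k\<close> degrees(2-4) assms(4) \<open>\<rho> ! j \<le> d\<close>]
  have "pvec_deg (\<lambda>c. balance_right \<epsilon> j k R i c) n = Some (?\<rho>' ! i)
      \<and> pvec_deg (\<lambda>a. balance_left \<epsilon> j k L a i) m = Some (d - ?\<rho>' ! i)"
    if "i < length \<rho>" for i
  proof -
    consider "i = j" | "i = k" | "i \<noteq> j" "i \<noteq> k" by blast
    then show ?thesis
    proof cases
      case 1
      then show ?thesis using lowered \<open>j \<noteq> k\<close> assms(2) by simp
    next
      case 2
      then show ?thesis using raised assms(3) by simp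
    next
      case 3
      then show ?thesis using R L that by (simp add: balance_left_def balance_right_def)
    qed
  qed
  then show ?thesis
    using setA_memI[where \<rho> = ?\<rho>' and R = "balance_right \<epsilon> j k R" and L = "balance_left \<epsilon> j k L"]
    by simp
qed

lemma setA_subset_pm_closure_balance_step:
  assumes "\<forall>x\<in>set \<rho>. x \<le> d" and "j < length \<rho>" and "k < length \<rho>" and "\<rho> ! k + 2 \<le> \<rho> ! j"
  shows "setA m n d \<rho> \<subseteq> pm_closure m n d (setA m n d (\<rho>[j := \<rho> ! j - 1, k := \<rho> ! k + 1]))"
proof
  fix P assume "P \<in> setA m n d \<rho>"
  then obtain L R where P: "P = pmat_mult m (length \<rho>) n L R"
    and R: "\<forall>i<length \<rho>. pvec_deg (\<lambda>j. R i j) n = Some (\<rho> ! i)"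
    and L: "\<forall>i<length \<rho>. pvec_deg (\<lambda>k. L k i) m = Some (d - \<rho> ! i)"
    by (rule setA_memE)
  define E where "E a c = [:coeff (L a k) 0:] * poly_shift 1 (R j c)
      - poly_shift 1 (L a k) * [:coeff (R j c) 0:]" for a c
  have "j \<noteq> k" using assms(4) by auto
  show "P \<in> pm_closure m n d (setA m n d (\<rho>[j := \<rho> ! j - 1, k := \<rho> ! k + 1]))"
  proof (rule pm_closureI[where C = "pm_dist m n d E (\<lambda>_ _. 0)"])
    show "pmat_ok m n P" and "\<forall>i<m. \<forall>j<n. degree (P i j) \<le> d"
      using setA_bounded assms(1) \<open>P \<in> setA m n d \<rho>\<close> by blast+
    show "pmat_mult m (length \<rho>) n (balance_left \<epsilon> j k L) (balance_right \<epsilon> j k R)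
        \<in> setA m n d (\<rho>[j := \<rho> ! j - 1, k := \<rho> ! k + 1])" for \<epsilon>
      using assms R L by (rule pmat_mult_balance_in_setA)
    show "pm_dist m n d P (pmat_mult m (length \<rho>) n (balance_left \<epsilon> j k L) (balance_right \<epsilon> j k R))
        \<le> cmod \<epsilon> * pm_dist m n d E (\<lambda>_ _. 0)" if "\<epsilon> \<noteq> 0" for \<epsilon>
      using pmat_mult_balance[OF assms(2,3) \<open>j \<noteq> k\<close> that] unfolding P E_def
      by (simp add: pm_dist_add_smult)
  qed
qed

definition balanced_degrees :: "nat \<Rightarrow> nat \<Rightarrow> nat list" where
  "balanced_degrees r a = replicate (a mod r) (a div r + 1) @ replicate (r - a mod r) (a div r)"

(* Stated without subtraction, so that it holds in any commutative monoid, in particular in nat. *)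
lemma sum_list_map_update_two:
  fixes f :: "'a \<Rightarrow> 'b::comm_monoid_add"
  assumes "j < length xs" and "k < length xs" and "j \<noteq> k"
  shows "sum_list (map f (xs[j := u, k := v])) + f (xs ! j) + f (xs ! k)
       = sum_list (map f xs) + f u + f v"
proof -
  let ?I = "{..<length xs}" and ?ys = "xs[j := u, k := v]"
  have sum_nth: "sum_list (map f zs) = (\<Sum>i<length zs. f (zs ! i))" for zs
    by (simp add: sum_list_sum_nth atLeast0LessThan)
  have "(\<Sum>i\<in>?I - {j, k}. f (?ys ! i)) = (\<Sum>i\<in>?I - {j, k}. f (xs ! i))"
    by (rule sum.cong) auto
  then show ?thesis
    using assms by (simp add: sum_nth sum_split_two[of ?I j k] ac_simps)
qed

lemma balance_step_sum_list:
  fixes xs :: "nat list"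
  assumes "j < length xs" and "k < length xs" and "xs ! k + 2 \<le> xs ! j"
  shows "sum_list (xs[j := xs ! j - 1, k := xs ! k + 1]) = sum_list xs"
    and "sum_list (map (\<lambda>x. x\<^sup>2) (xs[j := xs ! j - 1, k := xs ! k + 1]))
         < sum_list (map (\<lambda>x. x\<^sup>2) xs)"
proof -
  have "j \<noteq> k" using assms(3) by auto
  note update = sum_list_map_update_two[OF assms(1,2) this, of _ "xs ! j - 1" "xs ! k + 1"]
  show "sum_list (xs[j := xs ! j - 1, k := xs ! k + 1]) = sum_list xs"
    using update[of id] assms(3) by simp
  obtain t where t: "xs ! j = xs ! k + 2 + t" using assms(3) le_Suc_ex by blast
  have "(xs ! j - 1)\<^sup>2 + (xs ! k + 1)\<^sup>2 < (xs ! j)\<^sup>2 + (xs ! k)\<^sup>2"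
    unfolding t by (simp add: power2_eq_square algebra_simps)
  then show "sum_list (map (\<lambda>x. x\<^sup>2) (xs[j := xs ! j - 1, k := xs ! k + 1]))
      < sum_list (map (\<lambda>x. x\<^sup>2) xs)"
    using update[of "\<lambda>x. x\<^sup>2"] by linarith
qed

lemma mset_eq_balanced_degrees:
  fixes \<rho> :: "nat list"
  assumes "\<rho> \<noteq> []" and "\<forall>x\<in>set \<rho>. \<forall>y\<in>set \<rho>. x < y + 2"
  shows "mset \<rho> = mset (balanced_degrees (length \<rho>) (sum_list \<rho>))"
proof -
  define c where "c = Min (set \<rho>)"
  define u t where "u = count (mset \<rho>) c" and "t = count (mset \<rho>) (c + 1)"
  have "c \<in> set \<rho>" using assms(1) by (simp add: c_def)
  have near_min: "x = c \<or> x = c + 1" if "x \<in> set \<rho>" for x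
  proof -
    have "c \<le> x" using that by (simp add: c_def)
    moreover have "x < c + 2" using assms(2) that \<open>c \<in> set \<rho>\<close> by blast
    ultimately show ?thesis by linarith
  qed
  have "count (mset \<rho>) x = 0" if "x \<noteq> c" and "x \<noteq> c + 1" for x
    using near_min that by (auto simp: count_eq_zero_iff)
  then have M: "mset \<rho> = replicate_mset u c + replicate_mset t (c + 1)"
    by (intro multiset_eqI) (simp add: u_def t_def)
  have len: "length \<rho> = u + t"
    using arg_cong[OF M, of size] by simp
  have sum: "sum_list \<rho> = t + c * length \<rho>"
    using arg_cong[OF M, of sum_mset] len by (simp add: sum_mset_sum_list[symmetric] algebra_simps)
  have "t < length \<rho>"
    using len \<open>c \<in> set \<rho>\<close> by (simp add: u_def)
  then have "sum_list \<rho> div length \<rho> = c" and "sum_list \<rho> mod length \<rho> = t"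
    using assms(1) unfolding sum by simp_all
  then show ?thesis
    using M len by (simp add: balanced_degrees_def)
qed

lemma setA_subset_pm_closure_balanced:
  assumes "\<rho> \<noteq> []" and "\<forall>x\<in>set \<rho>. x \<le> d"
  shows "setA m n d \<rho> \<subseteq> pm_closure m n d (setA m n d (balanced_degrees (length \<rho>) (sum_list \<rho>)))"
  using assms
proof (induction "sum_list (map (\<lambda>x. x\<^sup>2) \<rho>)" arbitrary: \<rho> rule: less_induct)
  case less
  show ?case
  proof (cases "\<exists>j<length \<rho>. \<exists>k<length \<rho>. \<rho> ! k + 2 \<le> \<rho> ! j")
    case True
    then obtain j k where jk: "j < length \<rho>" "k < length \<rho>" "\<rho> ! k + 2 \<le> \<rho> ! j" by blast
    define \<rho>' where "\<rho>' = \<rho>[j := \<rho> ! j - 1, k := \<rho> ! k + 1]"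
    have "\<rho> ! j \<le> d" using less.prems(2) jk(1) by simp
    then have "\<forall>x\<in>set \<rho>'. x \<le> d"
      using less.prems(2) jk(3) set_update_subset_insert[of "\<rho>[j := \<rho> ! j - 1]" k]
        set_update_subset_insert[of \<rho> j] unfolding \<rho>'_def by fastforce
    moreover have "length \<rho>' = length \<rho>" "\<rho>' \<noteq> []"
      using less.prems(1) by (simp_all add: \<rho>'_def)
    moreover note balance_step_sum_list[OF jk, folded \<rho>'_def]
    ultimately have "setA m n d \<rho>' \<subseteq>
        pm_closure m n d (setA m n d (balanced_degrees (length \<rho>) (sum_list \<rho>)))"
      using less.hyps[of \<rho>'] by simp
    moreover have "setA m n d \<rho> \<subseteq> pm_closure m n d (setA m n d \<rho>')"
      unfolding \<rho>'_def using less.prems(2) jk by (rule setA_subset_pm_closure_balance_step)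
    ultimately show ?thesis by (rule pm_closure_trans[rotated])
  next
    case False
    then have "\<forall>x\<in>set \<rho>. \<forall>y\<in>set \<rho>. x < y + 2"
      by (auto simp: in_set_conv_nth not_le)
    then have "setA m n d \<rho> = setA m n d (balanced_degrees (length \<rho>) (sum_list \<rho>))"
      using less.prems(1) by (intro setA_mset_eq mset_eq_balanced_degrees)
    then show ?thesis using setA_subset_pm_closure[OF less.prems(2), of m n] by simp
  qed
qed

theorem theorem4p5:
  fixes m n r d a :: nat and \<rho> :: "nat list"
  assumes "m \<ge> 2" and "n \<ge> 2" and "d \<ge> 1"
    and "0 < r" and "r < min m n"
    and "a \<le> r * d"
    and "length \<rho> = r" and "\<forall>x\<in>set \<rho>. x \<le> d" and "sum_list \<rho> = a"
  shows "(\<forall>\<sigma>. \<sigma> permutes {..<r} \<longrightarrow>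
            setA m n d \<rho> = setA m n d (map (\<lambda>i. \<rho> ! \<sigma> i) [0..<r]))
       \<and> (\<forall>j k. j < r \<and> k < r \<and> j \<noteq> k \<and> \<rho> ! j \<ge> \<rho> ! k + 2 \<longrightarrow>
            setA m n d \<rho> \<subseteq>
              pm_closure m n d (setA m n d (\<rho>[j := \<rho> ! j - 1, k := \<rho> ! k + 1])))
       \<and> (setA m n d \<rho> \<subseteq>
            pm_closure m n d (setA m n d
              (replicate (a mod r) (a div r + 1) @ replicate (r - a mod r) (a div r))))"
proof (intro conjI allI impI)
  fix \<sigma> assume "\<sigma> permutes {..<r}"
  then have "mset (permute_list \<sigma> \<rho>) = mset \<rho>"
    using assms(7) by simp
  moreover have "permute_list \<sigma> \<rho> = map (\<lambda>i. \<rho> ! \<sigma> i) [0..<r]"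
    using assms(7) by (simp add: permute_list_def)
  ultimately show "setA m n d \<rho> = setA m n d (map (\<lambda>i. \<rho> ! \<sigma> i) [0..<r])"
    using setA_mset_eq[of "permute_list \<sigma> \<rho>" \<rho>] by simp
next
  fix j k assume "j < r \<and> k < r \<and> j \<noteq> k \<and> \<rho> ! j \<ge> \<rho> ! k + 2"
  then show "setA m n d \<rho> \<subseteq> pm_closure m n d (setA m n d (\<rho>[j := \<rho> ! j - 1, k := \<rho> ! k + 1]))"
    using assms(7,8) by (intro setA_subset_pm_closure_balance_step) auto
next
  have "\<rho> \<noteq> []" using assms(4,7) by auto
  then have "setA m n d \<rho> \<subseteq> pm_closure m n d (setA m n d (balanced_degrees r a))"
    using setA_subset_pm_closure_balanced[OF _ assms(8)] assms(7,9) by blast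
  then show "setA m n d \<rho> \<subseteq> pm_closure m n d (setA m n d
      (replicate (a mod r) (a div r + 1) @ replicate (r - a mod r) (a div r)))"
    by (simp only: balanced_degrees_def)
qed

end
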